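(* Let $S_0$ be the equivalence relation on $\mathcal M$ whose classes are the hyperplanes $\Sigma_t$, $t\in\mathbb R$; that is, $S_0((t,\vec x),(t',\vec x'))\iff t=t'$. Then: (a) $S_0$ is a non-trivial $\mathtt{IGal}$-invariant equivalence relation. It is the unique non-trivial $\mathtt{IGal}$-invariant equivalence relation $S$ on $\mathcal M$ such that every equivalence class of $S$ meets every Galilean worldline in at most one point. Here a Galilean worldline is the graph $\{(t,\vec x(t)):t\in I\}$ of a piecewise differentiable map $\vec x:I\to\mathbb R^3$ defined on an interval $I\subseteq\mathbb R$. (b) $S_0$ is also the unique non-trivial $\mathtt{IGal}$-invariant equivalence relation on $\mathcal M$ all of whose equivalence classes are connected subsets of $\mathbb R^4$.
   Context: Spacetime is $\mathcal M=\mathbb R^4$, with points written $(t,\vec x)$, $t\in\mathbb R$, $\vec x\in\mathbb R^3$. For $t\in\mathbb R$ let $\Sigma_t:=\{(t,\vec x):\vec x\in\mathbb R^3\}$. $\mathtt{IGal}$ is the group of bijections of $\mathbb R^4$ of the form $(t,\vec x)\mapsto(t+b,\;R\vec x+\vec v\,t+\vec a)$ with $R\in\mathtt{SO}(3)$, $\vec v,\vec a\in\mathbb R^3$ and $b\in\mathbb R$. An equivalence relation $S$ on $\mathcal M$ is $G$-invariant if $S(p,q)\Leftrightarrow S(g\cdot p,g\cdot q)$ for all $g\in G$ and all $p,q$. It is non-trivial if it is neither the one-class relation (single class $\mathcal M$) nor the equality relation (all classes singletons). *)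

theory Defs
  imports "HOL-Analysis.Analysis"
begin

type_synonym spt = "real \<times> (real^3)"

definition SO3 :: "(real^3^3) set" where
  "SO3 = {R. orthogonal_matrix R \<and> det R = 1}"

definition igal_map :: "real^3^3 \<Rightarrow> real^3 \<Rightarrow> real^3 \<Rightarrow> real \<Rightarrow> spt \<Rightarrow> spt" where
  "igal_map R v a b = (\<lambda>(t, x). (t + b, R *v x + t *\<^sub>R v + a))"

definition IGal :: "(spt \<Rightarrow> spt) set" where
  "IGal = {igal_map R v a b | R v a b. R \<in> SO3}"

definition invariant_under :: "('p \<Rightarrow> 'p) set \<Rightarrow> ('p \<Rightarrow> 'p \<Rightarrow> bool) \<Rightarrow> bool" where
  "invariant_under G S \<longleftrightarrow> (\<forall>g\<in>G. \<forall>p q. S p q \<longleftrightarrow> S (g p) (g q))"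

definition nontrivial_rel :: "('p \<Rightarrow> 'p \<Rightarrow> bool) \<Rightarrow> bool" where
  "nontrivial_rel S \<longleftrightarrow> \<not> (\<forall>p q. S p q) \<and> \<not> (\<forall>p q. S p q \<longleftrightarrow> p = q)"

definition eq_class :: "('p \<Rightarrow> 'p \<Rightarrow> bool) \<Rightarrow> 'p \<Rightarrow> 'p set" where
  "eq_class S p = {q. S p q}"

definition galilean_worldline :: "spt set \<Rightarrow> bool" where
  "galilean_worldline W \<longleftrightarrow>
     (\<exists>I (xf :: real \<Rightarrow> real^3). is_interval I \<and> xf piecewise_differentiable_on I \<and>
        W = {(t, xf t) | t. t \<in> I})"

definition S0 :: "spt \<Rightarrow> spt \<Rightarrow> bool" where
  "S0 p q \<longleftrightarrow> fst p = fst q"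

end

theory Submission
  imports Defs
begin

text \<open>
  Invariance under the translations of \<open>IGal\<close> makes an invariant equivalence \<open>S\<close> a coset
  relation of the additive subgroup \<open>K = {d. S 0 d}\<close>, which is moreover stable under boosts
  and rotations. If \<open>K\<close> contains an event \<open>(t, x)\<close> with \<open>t \<noteq> 0\<close>, boosts put every \<open>(t, y)\<close>
  into \<open>K\<close>: this contradicts the worldline condition for the worldline at rest, and under the
  connectedness condition it forces a whole time interval, hence all of \<open>\<real>\<^sup>4\<close>, into \<open>K\<close>.
  So \<open>K \<subseteq> {0} \<times> \<real>\<^sup>3\<close>, and by non-triviality \<open>K\<close> contains some \<open>(0, x\<^sub>0)\<close> with \<open>x\<^sub>0 \<noteq> 0\<close>.
  Every vector of norm at most \<open>2\<parallel>x\<^sub>0\<parallel>\<close> is a sum of two rotated copies of \<open>x\<^sub>0\<close>, and an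
  additively closed set containing a ball is everything; hence \<open>K = {0} \<times> \<real>\<^sup>3\<close>, i.e. \<open>S = S0\<close>.
\<close>

lemma add_closed_cball_subset_eq_UNIV:
  fixes K :: "'a::real_normed_vector set"
  assumes add: "\<And>x y. x \<in> K \<Longrightarrow> y \<in> K \<Longrightarrow> x + y \<in> K"
    and ball: "cball 0 c \<subseteq> K" and "c > 0"
  shows "K = UNIV"
proof -
  have multiple: "of_nat (Suc n) *\<^sub>R y \<in> K" if "y \<in> K" for y n
  proof (induction n)
    case (Suc n)
    have "of_nat (Suc (Suc n)) *\<^sub>R y = of_nat (Suc n) *\<^sub>R y + y"
      by (metis add.commute of_nat_Suc scaleR_add_left scaleR_one)
    then show ?case using add Suc that by metis
  qed (use that in simp)
  have "z \<in> K" for z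
  proof -
    define n where "n = nat \<lceil>norm z / c\<rceil>"
    have "norm z / c \<le> real (Suc n)" unfolding n_def by linarith
    then have "norm (z /\<^sub>R real (Suc n)) \<le> c"
      using \<open>c > 0\<close> by (simp add: field_simps)
    then have "z /\<^sub>R real (Suc n) \<in> K" using ball by auto
    from multiple[OF this, of n] show ?thesis by simp
  qed
  then show ?thesis by blast
qed

lemma sum_of_two_on_sphere:
  fixes z :: "'a::euclidean_space"
  assumes "2 \<le> DIM('a)" and "norm z \<le> 2 * r"
  obtains u w where "norm u = r" "norm w = r" "z = u + w"
proof -
  obtain h where "h \<noteq> 0" "orthogonal z h"
    using orthogonal_to_vector_exists assms(1) by metis
  define s where "s = sqrt (r\<^sup>2 - (norm z)\<^sup>2 / 4)"
  define k where "k = (s / norm h) *\<^sub>R h"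
  have "(norm z)\<^sup>2 \<le> (2 * r)\<^sup>2" using assms(2) by (intro power_mono) auto
  then have radicand: "0 \<le> r\<^sup>2 - (norm z)\<^sup>2 / 4" by (simp add: power_mult_distrib)
  then have s2: "s\<^sup>2 = r\<^sup>2 - (norm z)\<^sup>2 / 4" unfolding s_def by simp
  have "norm k = s" unfolding k_def s_def using \<open>h \<noteq> 0\<close> radicand by simp
  then have "k \<bullet> k = s\<^sup>2" by (metis power2_norm_eq_inner)
  moreover have "z \<bullet> k = 0"
    using \<open>orthogonal z h\<close> unfolding k_def orthogonal_def by simp
  ultimately have "(norm ((1/2) *\<^sub>R z + e *\<^sub>R k))\<^sup>2 = r\<^sup>2" if "e\<^sup>2 = 1" for e
    using that s2 unfolding power2_norm_eq_inner
    by (simp add: inner_add_left inner_add_right inner_commute[of k z]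
        mult.assoc[symmetric] power2_eq_square[symmetric])
  moreover have "0 \<le> r" using assms(2) norm_ge_zero[of z] by linarith
  ultimately have "norm ((1/2) *\<^sub>R z + e *\<^sub>R k) = r" if "e\<^sup>2 = 1" for e
    using that by (simp add: power2_eq_iff_nonneg)
  from that[OF this[of 1] this[of "-1"]] show ?thesis
    by (simp add: algebra_simps flip: scaleR_add_left)
qed

lemma SO3_transitive_on_spheres:
  fixes x y :: "real^3"
  assumes "norm x = norm y"
  obtains R where "R \<in> SO3" "R *v x = y"
proof -
  obtain f where f: "orthogonal_transformation f" "det (matrix f) = 1" "f x = y"
    using rotation_exists[of x y] assms by auto
  then have "linear f" by (simp add: orthogonal_transformation_linear)
  show ?thesis
  proof
    show "matrix f \<in> SO3"
      using f(1,2) orthogonal_transformation_matrix unfolding SO3_def by blast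
    show "matrix f *v x = y" using \<open>linear f\<close> f(3) by (simp add: matrix_works)
  qed
qed

lemma rotation_invariant_add_closed_eq_UNIV:
  fixes K :: "(real^3) set"
  assumes add: "\<And>x y. x \<in> K \<Longrightarrow> y \<in> K \<Longrightarrow> x + y \<in> K"
    and rot: "\<And>R x. R \<in> SO3 \<Longrightarrow> x \<in> K \<Longrightarrow> R *v x \<in> K"
    and "x0 \<in> K" "x0 \<noteq> 0"
  shows "K = UNIV"
proof (rule add_closed_cball_subset_eq_UNIV[OF add])
  have sphere: "u \<in> K" if "norm u = norm x0" for u
    using SO3_transitive_on_spheres[of x0 u] that rot \<open>x0 \<in> K\<close> by metis
  show "cball 0 (2 * norm x0) \<subseteq> K"
  proof
    fix z :: "real^3"
    assume "z \<in> cball 0 (2 * norm x0)"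
    then obtain u w where "norm u = norm x0" "norm w = norm x0" "z = u + w"
      using sum_of_two_on_sphere[of z "norm x0"] by auto
    then show "z \<in> K" using sphere add by blast
  qed
  show "2 * norm x0 > 0" using \<open>x0 \<noteq> 0\<close> by simp
qed

lemma identity_in_SO3: "mat 1 \<in> SO3"
  unfolding SO3_def by (simp add: orthogonal_matrix_id det_I)

lemma translation_in_IGal: "(\<lambda>p. p + a) \<in> IGal"
proof -
  have "igal_map (mat 1) 0 (snd a) (fst a) \<in> IGal"
    unfolding IGal_def using identity_in_SO3 by blast
  moreover have "igal_map (mat 1) 0 (snd a) (fst a) = (\<lambda>p. p + a)"
    unfolding igal_map_def by (auto simp: prod_eq_iff)
  ultimately show ?thesis by simp
qed

lemma boost_in_IGal: "(\<lambda>(t, x). (t, x + t *\<^sub>R v)) \<in> IGal"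
proof -
  have "igal_map (mat 1) v 0 0 \<in> IGal" unfolding IGal_def using identity_in_SO3 by blast
  moreover have "igal_map (mat 1) v 0 0 = (\<lambda>(t, x). (t, x + t *\<^sub>R v))"
    unfolding igal_map_def by auto
  ultimately show ?thesis by simp
qed

lemma rotation_in_IGal: "R \<in> SO3 \<Longrightarrow> (\<lambda>(t, x). (t, R *v x)) \<in> IGal"
proof -
  assume "R \<in> SO3"
  then have "igal_map R 0 0 0 \<in> IGal" unfolding IGal_def by blast
  moreover have "igal_map R 0 0 0 = (\<lambda>(t, x). (t, R *v x))"
    unfolding igal_map_def by auto
  ultimately show ?thesis by simp
qed

definition meets_worldlines_at_most_once :: "(spt \<Rightarrow> spt \<Rightarrow> bool) \<Rightarrow> bool" where
  "meets_worldlines_at_most_once S \<longleftrightarrow>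
     (\<forall>p W. galilean_worldline W \<longrightarrow> (\<forall>q1\<in>eq_class S p \<inter> W. \<forall>q2\<in>eq_class S p \<inter> W. q1 = q2))"

locale IGal_invariant_equivalence =
  fixes S :: "spt \<Rightarrow> spt \<Rightarrow> bool"
  assumes equivp: "equivp S" and invariant: "invariant_under IGal S"
begin

lemma rel_IGal_iff: "g \<in> IGal \<Longrightarrow> S (g p) (g q) \<longleftrightarrow> S p q"
  using invariant unfolding invariant_under_def by blast

lemma rel_iff_kernel: "S p q \<longleftrightarrow> S 0 (q - p)"
  using rel_IGal_iff[OF translation_in_IGal[of "- p"], of p q] by simp

lemma kernel_zero: "S 0 0"
  using equivp by (simp add: equivp_reflp)

lemma kernel_add: "S 0 a \<Longrightarrow> S 0 b \<Longrightarrow> S 0 (a + b)"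
  using rel_iff_kernel[of a "a + b"] equivp by (metis add_diff_cancel_left' equivp_transp)

lemma kernel_uminus: "S 0 a \<Longrightarrow> S 0 (- a)"
  using rel_iff_kernel[of a 0] equivp by (metis diff_0 equivp_symp)

lemma kernel_boost: "S 0 (t, x) \<Longrightarrow> S 0 (t, x + t *\<^sub>R v)"
  using rel_IGal_iff[OF boost_in_IGal[of v], of 0 "(t, x)"] by (simp add: zero_prod_def)

lemma kernel_rotate: "R \<in> SO3 \<Longrightarrow> S 0 (t, x) \<Longrightarrow> S 0 (t, R *v x)"
  using rel_IGal_iff[OF rotation_in_IGal, of R 0 "(t, x)"] by (simp add: zero_prod_def)

lemma kernel_fixed_time: "S 0 (t, x) \<Longrightarrow> t \<noteq> 0 \<Longrightarrow> S 0 (t, y)"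
  using kernel_boost[of t x "(1 / t) *\<^sub>R (y - x)"] by simp

lemma eq_S0_if_kernel_simultaneous:
  assumes "nontrivial_rel S" and simultaneous: "\<And>d. S 0 d \<Longrightarrow> fst d = 0"
  shows "S = S0"
proof -
  obtain p q where "S p q" "p \<noteq> q"
    using \<open>nontrivial_rel S\<close> equivp unfolding nontrivial_rel_def by (metis equivp_reflp)
  define d where "d = q - p"
  have "S 0 d" using \<open>S p q\<close> rel_iff_kernel d_def by simp
  then have "d = (0, snd d)" using simultaneous by (simp add: prod_eq_iff)
  have "snd d \<noteq> 0"
  proof
    assume "snd d = 0"
    with \<open>d = (0, snd d)\<close> have "d = 0" by (simp add: zero_prod_def)
    with \<open>p \<noteq> q\<close> show False unfolding d_def by simp
  qed
  have spatial: "{x. S 0 (0, x)} = UNIV"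
  proof (rule rotation_invariant_add_closed_eq_UNIV)
    show "x + y \<in> {x. S 0 (0, x)}" if "x \<in> {x. S 0 (0, x)}" "y \<in> {x. S 0 (0, x)}" for x y
      using kernel_add[of "(0, x)" "(0, y)"] that by simp
    show "R *v x \<in> {x. S 0 (0, x)}" if "R \<in> SO3" "x \<in> {x. S 0 (0, x)}" for R x
      using kernel_rotate that by simp
    show "snd d \<in> {x. S 0 (0, x)}" using \<open>S 0 d\<close> \<open>d = (0, snd d)\<close> by simp
  qed (fact \<open>snd d \<noteq> 0\<close>)
  have kernel: "S 0 e \<longleftrightarrow> fst e = 0" for e
  proof
    assume "fst e = 0"
    then have "e = (0, snd e)" by (simp add: prod_eq_iff)
    then show "S 0 e" using spatial by (metis UNIV_I mem_Collect_eq)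
  qed (rule simultaneous)
  have "S p q \<longleftrightarrow> S0 p q" for p q
    using rel_iff_kernel[of p q] kernel[of "q - p"] unfolding S0_def by auto
  then show ?thesis by blast
qed

lemma kernel_simultaneous_if_meets_worldlines_at_most_once:
  assumes once: "meets_worldlines_at_most_once S" and "S 0 d"
  shows "fst d = 0"
proof (rule ccontr)
  assume "fst d \<noteq> 0"
  then have "S 0 (fst d, 0)" using kernel_fixed_time[of "fst d" "snd d"] \<open>S 0 d\<close> by simp
  moreover have "galilean_worldline {(t, 0) | t. t \<in> UNIV}"
    unfolding galilean_worldline_def by (intro exI[of _ UNIV] exI[of _ "\<lambda>_. 0"]) simp
  ultimately have "(fst d, 0) = (0 :: spt)"
    using once kernel_zero
    unfolding meets_worldlines_at_most_once_def eq_class_def zero_prod_def by blast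
  with \<open>fst d \<noteq> 0\<close> show False by (simp add: zero_prod_def)
qed

lemma rel_if_kernel_meets_time_segment:
  assumes "t \<noteq> 0" and meets: "\<And>s. s \<in> closed_segment 0 t \<Longrightarrow> \<exists>x. S 0 (s, x)"
  shows "S p q"
proof -
  obtain x where "S 0 (t, x)" using meets[of t] by auto
  then have at_t: "S 0 (t, y)" for y using kernel_fixed_time \<open>t \<noteq> 0\<close> by blast
  have spatial: "S 0 (0, y)" for y
    using kernel_add[OF at_t[of y] kernel_uminus[OF at_t[of 0]]] by simp
  have segment: "S 0 (s, 0)" if "s \<in> closed_segment 0 t" for s
  proof -
    obtain y where "S 0 (s, y)" using meets \<open>s \<in> closed_segment 0 t\<close> by blast
    from kernel_add[OF this spatial[of "- y"]] show ?thesis by simp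
  qed
  have temporal: "{s. S 0 (s, 0)} = UNIV"
  proof (rule add_closed_cball_subset_eq_UNIV)
    show "x + y \<in> {s. S 0 (s, 0)}" if "x \<in> {s. S 0 (s, 0)}" "y \<in> {s. S 0 (s, 0)}" for x y
      using kernel_add[of "(x, 0)" "(y, 0)"] that by simp
    show "cball 0 \<bar>t\<bar> \<subseteq> {s. S 0 (s, 0)}"
    proof
      fix s :: real
      assume "s \<in> cball 0 \<bar>t\<bar>"
      then have "s \<in> closed_segment 0 t \<or> - s \<in> closed_segment 0 t"
        by (auto simp: closed_segment_eq_real_ivl)
      then show "s \<in> {s. S 0 (s, 0)}"
        using segment kernel_uminus[of "(- s, 0)"] by auto
    qed
  qed (use \<open>t \<noteq> 0\<close> in simp)
  have "S 0 e" for e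
    using kernel_add[of "(fst e, 0)" "(0, snd e)"] temporal spatial by (simp add: set_eq_iff)
  then show ?thesis using rel_iff_kernel by blast
qed

lemma kernel_simultaneous_if_connected_classes:
  assumes "nontrivial_rel S" and connected: "\<And>p. connected (eq_class S p)" and "S 0 d"
  shows "fst d = 0"
proof (rule ccontr)
  assume "fst d \<noteq> 0"
  have "connected (fst ` eq_class S 0)"
    using connected by (rule connected_continuous_image[rotated]) (intro continuous_intros)
  then have "convex (fst ` eq_class S 0)" by (simp add: is_interval_connected_1 is_interval_convex)
  moreover have "0 \<in> fst ` eq_class S 0"
    using kernel_zero unfolding eq_class_def by (metis fst_zero image_eqI mem_Collect_eq)
  moreover have "fst d \<in> fst ` eq_class S 0"
    using \<open>S 0 d\<close> unfolding eq_class_def by blast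
  ultimately have "closed_segment 0 (fst d) \<subseteq> fst ` eq_class S 0"
    by (simp add: closed_segment_subset)
  then have "\<exists>x. S 0 (s, x)" if "s \<in> closed_segment 0 (fst d)" for s
    using that unfolding eq_class_def by force
  then have "S p q" for p q by (rule rel_if_kernel_meets_time_segment[OF \<open>fst d \<noteq> 0\<close>])
  then show False using \<open>nontrivial_rel S\<close> unfolding nontrivial_rel_def by blast
qed

end

lemma equivp_S0: "equivp S0"
  unfolding S0_def by (intro equivpI reflpI sympI transpI) auto

lemma nontrivial_rel_S0: "nontrivial_rel S0"
proof -
  have "\<not> S0 (0, 0) (1, 0)" "S0 (0, 0) (0, axis 1 1)" "(0, 0) \<noteq> (0 :: real, axis 1 (1 :: real))"
    unfolding S0_def by (auto simp: axis_eq_0_iff)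
  then show ?thesis unfolding nontrivial_rel_def by blast
qed

lemma invariant_under_IGal_S0: "invariant_under IGal S0"
  unfolding invariant_under_def IGal_def S0_def igal_map_def by (auto split: prod.splits)

lemma S0_meets_worldlines_at_most_once: "meets_worldlines_at_most_once S0"
  unfolding meets_worldlines_at_most_once_def galilean_worldline_def eq_class_def S0_def by auto

lemma connected_eq_class_S0: "connected (eq_class S0 p)"
proof -
  have "eq_class S0 p = {fst p} \<times> UNIV" unfolding eq_class_def S0_def by auto
  then show ?thesis by (simp add: connected_Times connected_UNIV)
qed

theorem theorem3:
  shows "(equivp S0 \<and> nontrivial_rel S0 \<and> invariant_under IGal S0 \<and>
          (\<forall>p W. galilean_worldline W \<longrightarrow> (\<forall>q1\<in>eq_class S0 p \<inter> W. \<forall>q2\<in>eq_class S0 p \<inter> W. q1 = q2)) \<and>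
          (\<forall>S :: spt \<Rightarrow> spt \<Rightarrow> bool. equivp S \<and> nontrivial_rel S \<and> invariant_under IGal S \<and>
             (\<forall>p W. galilean_worldline W \<longrightarrow> (\<forall>q1\<in>eq_class S p \<inter> W. \<forall>q2\<in>eq_class S p \<inter> W. q1 = q2))
             \<longrightarrow> S = S0))
       \<and> ((\<forall>p. connected (eq_class S0 p)) \<and>
          (\<forall>S :: spt \<Rightarrow> spt \<Rightarrow> bool. equivp S \<and> nontrivial_rel S \<and> invariant_under IGal S \<and>
             (\<forall>p. connected (eq_class S p)) \<longrightarrow> S = S0))"
  unfolding meets_worldlines_at_most_once_def[symmetric]
proof (intro conjI allI impI equivp_S0 nontrivial_rel_S0 invariant_under_IGal_S0
    S0_meets_worldlines_at_most_once connected_eq_class_S0)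
  fix S :: "spt \<Rightarrow> spt \<Rightarrow> bool"
  assume "equivp S \<and> nontrivial_rel S \<and> invariant_under IGal S \<and> meets_worldlines_at_most_once S"
  then interpret IGal_invariant_equivalence S by unfold_locales auto
  show "S = S0"
    using \<open>_ \<and> _\<close> eq_S0_if_kernel_simultaneous kernel_simultaneous_if_meets_worldlines_at_most_once
    by blast
next
  fix S :: "spt \<Rightarrow> spt \<Rightarrow> bool"
  assume "equivp S \<and> nontrivial_rel S \<and> invariant_under IGal S \<and> (\<forall>p. connected (eq_class S p))"
  then interpret IGal_invariant_equivalence S by unfold_locales auto
  show "S = S0"
    using \<open>_ \<and> _\<close> eq_S0_if_kernel_simultaneous kernel_simultaneous_if_connected_classes
    by blast
qed

end
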